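(* Let $s\in\{0,1\}^n$, $p\in[0,1)$, and $x\in\{0,1\}^k$ with $k\ge2$. Then $$N_x=\frac{1}{(1-p)^k}\left(E_x-\sum_{i=k+1}^{n}\sum_{y\in Y_i(x)}(-1)^{|y|-|x|+1}E_y\binom{y}{x}'\left(\frac{p}{1-p}\right)^{i-k}\right).$$
   Context: Deletion channel: a trace $\tilde S$ of $s$ is obtained by deleting each bit of $s$ independently with probability $p$. For a binary string $y$, $N_y$ is the number of positions at which $y$ occurs as a (contiguous) substring of $s$, and $E_y$ is the expected number of positions at which $y$ occurs as a substring of $\tilde S$. For a string $z$, $z[2:-2]$ is $z$ with its first and last symbols removed; $\binom{y}{z}$ is the number of ways to delete $|y|-|z|$ symbols of $y$ to obtain $z$, and $\binom{y}{z}'=\binom{y[2:-2]}{z[2:-2]}$. $Y_i(x)$ is the set of binary strings of length $i$ that are supersequences of $x$ with the same first bit and same last bit as $x$. *)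

theory Defs
  imports "HOL-Analysis.Analysis" "HOL-Library.Sublist"
begin

definition occ :: "bool list \<Rightarrow> bool list \<Rightarrow> nat" where
  "occ y s = card {i. i + length y \<le> length s \<and> take (length y) (drop i s) = y}"

text \<open>Expected number of occurrences of y in a trace of s through the deletion channel
  with deletion probability p: the set T of retained positions has probability
  (1-p)^|T| p^(n-|T|), and the trace is nths s T.\<close>
definition exp_occ :: "real \<Rightarrow> bool list \<Rightarrow> bool list \<Rightarrow> real" where
  "exp_occ p s y = (\<Sum>T\<in>Pow {0..<length s}.
      (1 - p) ^ card T * p ^ (length s - card T) * real (occ y (nths s T)))"

definition binom_seq :: "bool list \<Rightarrow> bool list \<Rightarrow> nat" where
  "binom_seq y z = card {T. T \<subseteq> {0..<length y} \<and> card T = length z \<and> nths y T = z}"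

definition strip :: "bool list \<Rightarrow> bool list" where
  "strip z = butlast (tl z)"

definition binom' :: "bool list \<Rightarrow> bool list \<Rightarrow> nat" where
  "binom' y z = binom_seq (strip y) (strip z)"

definition Yset :: "nat \<Rightarrow> bool list \<Rightarrow> bool list set" where
  "Yset i x = {y. length y = i \<and> subseq x y \<and> hd y = hd x \<and> last y = last x}"

end

theory Submission
  imports Defs
begin

text \<open>An occurrence of y in the trace comes from an embedding W of y into s (a set of
  positions with nths s W = y) whose positions survive while all other positions between Min W
  and Max W are deleted, so E_y is a sum over embeddings of (1-p)^|y| p^(window_length W - |y|).
  Regrouping the correction terms by the index set W of the supersequence y = nths s W, the
  number binom' y x counts the embeddings V \<subseteq> W of x that contain Min W and Max W, and
  the powers of p/(1-p) turn every weight into (1-p)^|x| p^(window_length W - |x|). Exchanging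
  the sums, for a fixed embedding V of x the remaining sum runs over
  V \<subseteq> W \<subseteq> {Min V..Max V} with alternating signs; it vanishes unless
  V = {Min V..Max V}, i.e. unless V is an occurrence of x in s.\<close>

abbreviation trace_weight :: "real \<Rightarrow> nat \<Rightarrow> nat set \<Rightarrow> real" where
  "trace_weight p n T \<equiv> (1 - p) ^ card T * p ^ (n - card T)"

abbreviation window_length :: "nat set \<Rightarrow> nat" where
  "window_length W \<equiv> Max W + 1 - Min W"

lemma sum_Pow_lessThan_Suc:
  "(\<Sum>T\<in>Pow {0..<Suc n}. f T) =
     (\<Sum>T\<in>Pow {0..<n}. f (Suc ` T)) + (\<Sum>T\<in>Pow {0..<n}. f (insert 0 (Suc ` T)))"
proof -
  have Pow_eq: "Pow {0..<Suc n} = image Suc ` Pow {0..<n} \<union> insert 0 ` image Suc ` Pow {0..<n}"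
    by (simp add: atLeast0_lessThan_Suc_eq_insert_0 Pow_insert image_Pow_surj)
  have inj_Suc: "inj_on (image Suc) (Pow {0..<n})"
    by (meson inj_Suc inj_image_eq_iff inj_onI)
  have inj_insert: "inj_on (\<lambda>T. insert 0 (Suc ` T)) (Pow {0..<n})"
  proof (rule inj_onI)
    fix A B assume "insert 0 (Suc ` A) = insert (0::nat) (Suc ` B)"
    then have "Suc ` A = Suc ` B" by (metis Diff_insert_absorb imageE nat.distinct(1))
    then show "A = B" by (simp add: inj_image_eq_iff)
  qed
  have "(\<Sum>T\<in>Pow {0..<Suc n}. f T) =
      (\<Sum>T\<in>image Suc ` Pow {0..<n}. f T) + (\<Sum>T\<in>insert 0 ` image Suc ` Pow {0..<n}. f T)"
    unfolding Pow_eq by (rule sum.union_disjoint) auto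
  also have "\<dots> = (\<Sum>T\<in>Pow {0..<n}. f (Suc ` T)) + (\<Sum>T\<in>Pow {0..<n}. f (insert 0 (Suc ` T)))"
    using sum.reindex[OF inj_Suc, of f] sum.reindex[OF inj_insert, of f]
    by (simp add: image_image comp_def)
  finally show ?thesis .
qed

lemma sum_trace_weight_Suc:
  fixes p :: real
  shows "(\<Sum>T\<in>Pow {0..<Suc n}. trace_weight p (Suc n) T * f T) =
     p * (\<Sum>T\<in>Pow {0..<n}. trace_weight p n T * f (Suc ` T))
   + (1 - p) * (\<Sum>T\<in>Pow {0..<n}. trace_weight p n T * f (insert 0 (Suc ` T)))"
proof -
  have card_Suc: "card (Suc ` T) = card T" for T
    by (simp add: card_image)
  have card_insert: "T \<subseteq> {0..<n} \<Longrightarrow> card (insert 0 (Suc ` T)) = Suc (card T)" for T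
    using finite_subset[of T "{0..<n}"] by (simp add: card_image image_iff)
  have card_le: "T \<subseteq> {0..<n} \<Longrightarrow> card T \<le> n" for T
    using card_mono[of "{0..<n}" T] by simp
  show ?thesis
    unfolding sum_Pow_lessThan_Suc sum_distrib_left
  proof (rule arg_cong2[where f="(+)"]; rule sum.cong[OF refl])
    fix T assume "T \<in> Pow {0..<n}"
    then show "trace_weight p (Suc n) (Suc ` T) * f (Suc ` T) = p * (trace_weight p n T * f (Suc ` T))"
      and "trace_weight p (Suc n) (insert 0 (Suc ` T)) * f (insert 0 (Suc ` T)) =
             (1 - p) * (trace_weight p n T * f (insert 0 (Suc ` T)))"
      using card_le[of T] by (simp_all add: card_Suc card_insert Suc_diff_le mult_ac)
  qed
qed

lemma sum_trace_weight_eq_1: "(\<Sum>T\<in>Pow {0..<n}. trace_weight p n T) = 1"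
proof (induction n)
  case (Suc n)
  then show ?case using sum_trace_weight_Suc[of p n "\<lambda>_. 1"] by simp
qed simp

lemma nths_Cons_Suc_image: "nths (a # xs) (Suc ` T) = nths xs T"
  by (simp add: nths_Cons image_iff)

lemma nths_Cons_insert_0_Suc_image: "nths (a # xs) (insert 0 (Suc ` T)) = a # nths xs T"
  by (simp add: nths_Cons image_iff)

lemma nths_cong: "(\<And>i. i < length xs \<Longrightarrow> i \<in> A \<longleftrightarrow> i \<in> B) \<Longrightarrow> nths xs A = nths xs B"
  unfolding nths_def by (rule arg_cong[where f="map fst"], rule filter_cong) (auto simp: set_zip)

lemma length_nths_subset: "W \<subseteq> {0..<length xs} \<Longrightarrow> length (nths xs W) = card W"
  by (simp add: length_nths, intro arg_cong[where f=card]) auto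

lemma nths_subset_nonempty: "W \<subseteq> {0..<length xs} \<Longrightarrow> W \<noteq> {} \<Longrightarrow> nths xs W \<noteq> []"
  using length_nths_subset[of W xs] finite_subset[of W "{0..<length xs}"] by auto

lemma Max_Suc_image: "finite W \<Longrightarrow> W \<noteq> {} \<Longrightarrow> Max (Suc ` W) = Suc (Max W)"
  by (simp add: mono_Max_commute mono_Suc)

lemma Min_Suc_image: "finite W \<Longrightarrow> W \<noteq> {} \<Longrightarrow> Min (Suc ` W) = Suc (Min W)"
  by (simp add: mono_Min_commute mono_Suc)

lemma card_le_window_length: "finite W \<Longrightarrow> W \<noteq> {} \<Longrightarrow> card W \<le> window_length W"
proof -
  assume "finite W" "W \<noteq> {}"
  then have "card W \<le> card {Min W..Max W}"
    by (intro card_mono) auto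
  then show ?thesis by simp
qed

section \<open>Expected occurrences as a sum over embeddings\<close>

lemma occ_Cons:
  assumes "y \<noteq> []"
  shows "occ y (a # t) = occ y t + (if take (length y) (a # t) = y then 1 else 0)"
proof -
  let ?m = "length y"
  define S where "S = {i. i + ?m \<le> length t \<and> take ?m (drop i t) = y}"
  define S' where "S' = {i. i + ?m \<le> length (a # t) \<and> take ?m (drop i (a # t)) = y}"
  have "finite S" unfolding S_def by (rule finite_subset[of _ "{..length t}"]) auto
  have S'_eq: "S' = (if take ?m (a # t) = y then {0} else {}) \<union> Suc ` S"
  proof (rule set_eqI)
    fix i show "i \<in> S' \<longleftrightarrow> i \<in> (if take ?m (a # t) = y then {0} else {}) \<union> Suc ` S"
    proof (cases i)
      case 0
      have "take ?m (a # t) = y \<Longrightarrow> ?m \<le> length (a # t)"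
        by (drule arg_cong[where f=length]) simp
      then show ?thesis using 0 by (auto simp: S'_def)
    qed (auto simp: S'_def S_def)
  qed
  have "occ y (a # t) = card S'" unfolding occ_def S'_def ..
  also have "\<dots> = (if take ?m (a # t) = y then 1 else 0) + card (Suc ` S)"
    unfolding S'_eq using \<open>finite S\<close> by (subst card_Un_disjoint) auto
  also have "card (Suc ` S) = occ y t" unfolding occ_def S_def by (simp add: card_image)
  finally show ?thesis by simp
qed

text \<open>In the two embedding
  sums the summand for W is the probability that the positions in W are retained while all other
  positions up to Max W, resp. between Min W and Max W, are deleted.\<close>

definition prefix_prob :: "real \<Rightarrow> bool list \<Rightarrow> bool list \<Rightarrow> real" where
  "prefix_prob p s y = (\<Sum>T\<in>Pow {0..<length s}.
      trace_weight p (length s) T * (if take (length y) (nths s T) = y then 1 else 0))"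

definition prefix_embedding_sum :: "real \<Rightarrow> bool list \<Rightarrow> bool list \<Rightarrow> real" where
  "prefix_embedding_sum p s y = (\<Sum>W\<in>Pow {0..<length s}.
      (if nths s W = y then (1 - p) ^ length y * p ^ (Max W + 1 - length y) else 0))"

definition embedding_sum :: "real \<Rightarrow> bool list \<Rightarrow> bool list \<Rightarrow> real" where
  "embedding_sum p s y = (\<Sum>W\<in>Pow {0..<length s}.
      (if nths s W = y then (1 - p) ^ length y * p ^ (window_length W - length y) else 0))"

lemma prefix_prob_Cons:
  "prefix_prob p (a # s) y = p * prefix_prob p s y + (1 - p) * (\<Sum>T\<in>Pow {0..<length s}.
      trace_weight p (length s) T * (if take (length y) (a # nths s T) = y then 1 else 0))"
  unfolding prefix_prob_def
  by (simp only: length_Cons sum_trace_weight_Suc nths_Cons_Suc_image nths_Cons_insert_0_Suc_image)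

lemma sum_trace_weight_take_Cons:
  assumes "y \<noteq> []"
  shows "(\<Sum>T\<in>Pow {0..<length s}.
      trace_weight p (length s) T * (if take (length y) (a # nths s T) = y then 1 else 0)) =
    (if hd y = a then (if tl y = [] then 1 else prefix_prob p s (tl y)) else 0)"
proof -
  obtain b y' where y: "y = b # y'" using assms by (cases y) auto
  have "take (length y) (a # t) = y \<longleftrightarrow> a = b \<and> take (length y') t = y'" for t
    by (simp add: y)
  then show ?thesis
    using sum_trace_weight_eq_1[of p "length s"] by (simp add: y prefix_prob_def)
qed

lemma sum_embeddings_Cons_head:
  fixes p :: real
  assumes "y \<noteq> []"
  shows "(\<Sum>W\<in>Pow {0..<length s}. (if a # nths s W = y
        then (1 - p) ^ length y * p ^ (Max (insert 0 (Suc ` W)) + 1 - length y) else 0)) =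
    (1 - p) * (if hd y = a then (if tl y = [] then 1 else prefix_embedding_sum p s (tl y)) else 0)"
proof -
  obtain b y' where y: "y = b # y'" using assms by (cases y) auto
  have summand: "(if a # nths s W = y
        then (1 - p) ^ length y * p ^ (Max (insert 0 (Suc ` W)) + 1 - length y) else 0) =
      (if b = a then (if y' = [] then (if W = {} then 1 - p else 0)
       else (1 - p) * (if nths s W = y' then (1 - p) ^ length y' * p ^ (Max W + 1 - length y') else 0))
       else 0)"
    if W: "W \<in> Pow {0..<length s}" for W
  proof (cases "W = {}")
    case False
    have "Max (insert 0 (Suc ` W)) = Suc (Max W)"
      using False finite_subset[of W "{0..<length s}"] W by (simp add: Max_insert Max_Suc_image)
    then show ?thesis using nths_subset_nonempty[of W s] False W by (auto simp: y)
  qed (auto simp: y)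
  show ?thesis
    using sum.cong[OF refl summand, of "Pow {0..<length s}"]
    by (auto simp: y sum.delta' prefix_embedding_sum_def sum_distrib_left)
qed

lemma prefix_embedding_sum_Cons:
  fixes p :: real
  assumes "y \<noteq> []"
  shows "prefix_embedding_sum p (a # s) y = p * prefix_embedding_sum p s y +
    (\<Sum>W\<in>Pow {0..<length s}. (if a # nths s W = y
        then (1 - p) ^ length y * p ^ (Max (insert 0 (Suc ` W)) + 1 - length y) else 0))"
proof -
  have shifted: "(if nths s W = y then (1 - p) ^ length y * p ^ (Max (Suc ` W) + 1 - length y) else 0) =
      p * (if nths s W = y then (1 - p) ^ length y * p ^ (Max W + 1 - length y) else 0)"
    if W: "W \<in> Pow {0..<length s}" for W
  proof (cases "nths s W = y")
    case True
    have "finite W" using W finite_subset by auto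
    moreover have "W \<noteq> {}" using True assms by auto
    moreover have "length y \<le> Max W + 1"
      using True W length_nths_subset[of W s] card_le_window_length[OF \<open>finite W\<close> \<open>W \<noteq> {}\<close>]
      by auto
    ultimately show ?thesis using True by (simp add: Max_Suc_image Suc_diff_le)
  qed simp
  show ?thesis
    unfolding prefix_embedding_sum_def sum_distrib_left
    by (simp only: length_Cons sum_Pow_lessThan_Suc nths_Cons_Suc_image
        nths_Cons_insert_0_Suc_image sum.cong[OF refl shifted])
qed

lemma prefix_prob_eq_prefix_embedding_sum:
  "y \<noteq> [] \<Longrightarrow> prefix_prob p s y = prefix_embedding_sum p s y"
proof (induction s arbitrary: y)
  case Nil
  then show ?case by (simp add: prefix_prob_def prefix_embedding_sum_def)
next
  case (Cons a s)
  show ?case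
    unfolding prefix_prob_Cons prefix_embedding_sum_Cons[OF Cons.prems]
      sum_trace_weight_take_Cons[OF Cons.prems] sum_embeddings_Cons_head[OF Cons.prems]
    using Cons by (cases y) auto
qed

lemma exp_occ_Cons:
  assumes "y \<noteq> []"
  shows "exp_occ p (a # s) y = exp_occ p s y +
    (1 - p) * (if hd y = a then (if tl y = [] then 1 else prefix_prob p s (tl y)) else 0)"
proof -
  have "exp_occ p (a # s) y = p * exp_occ p s y +
      (1 - p) * (\<Sum>T\<in>Pow {0..<length s}. trace_weight p (length s) T * real (occ y (a # nths s T)))"
    unfolding exp_occ_def
    by (simp only: length_Cons sum_trace_weight_Suc nths_Cons_Suc_image nths_Cons_insert_0_Suc_image)
  also have "(\<Sum>T\<in>Pow {0..<length s}. trace_weight p (length s) T * real (occ y (a # nths s T))) =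
      exp_occ p s y + (\<Sum>T\<in>Pow {0..<length s}.
        trace_weight p (length s) T * (if take (length y) (a # nths s T) = y then 1 else 0))"
  proof -
    have "real (occ y (a # t)) = real (occ y t) + (if take (length y) (a # t) = y then 1 else 0)" for t
      using occ_Cons[OF assms] by simp
    then show ?thesis by (simp add: exp_occ_def distrib_left sum.distrib)
  qed
  finally show ?thesis unfolding sum_trace_weight_take_Cons[OF assms] by (simp add: algebra_simps)
qed

lemma embedding_sum_Cons:
  fixes p :: real
  shows "embedding_sum p (a # s) y = embedding_sum p s y +
    (\<Sum>W\<in>Pow {0..<length s}. (if a # nths s W = y
        then (1 - p) ^ length y * p ^ (Max (insert 0 (Suc ` W)) + 1 - length y) else 0))"
proof -
  have "Min (insert 0 (Suc ` W)) = 0" if "W \<in> Pow {0..<length s}" for W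
    using that finite_subset[of W "{0..<length s}"] by (intro Min_eqI) auto
  moreover have "window_length (Suc ` W) = window_length W" if "W \<in> Pow {0..<length s}" for W
    using that finite_subset[of W "{0..<length s}"]
    by (cases "W = {}") (auto simp: Max_Suc_image Min_Suc_image)
  ultimately show ?thesis
    unfolding embedding_sum_def
    by (simp only: length_Cons sum_Pow_lessThan_Suc nths_Cons_Suc_image nths_Cons_insert_0_Suc_image)
      (auto intro!: arg_cong2[where f="(+)"] sum.cong)
qed

lemma exp_occ_eq_embedding_sum:
  fixes p :: real
  assumes "y \<noteq> []"
  shows "exp_occ p s y = embedding_sum p s y"
proof (induction s)
  case Nil
  have "occ y [] = 0" unfolding occ_def using assms by simp
  then show ?case using assms by (simp add: exp_occ_def embedding_sum_def)
next
  case (Cons a s)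
  show ?case
    unfolding exp_occ_Cons[OF assms] embedding_sum_Cons sum_embeddings_Cons_head[OF assms] Cons.IH
    using prefix_prob_eq_prefix_embedding_sum[of "tl y" p s] by auto
qed

section \<open>Embeddings with prescribed ends\<close>

text \<open>rank_in W i is the position in nths s W of the entry s ! i, for i \<in> W.\<close>

definition rank_in :: "nat set \<Rightarrow> nat \<Rightarrow> nat" where
  "rank_in A i = card {j\<in>A. j < i}"

lemma rank_in_less: "finite A \<Longrightarrow> i \<in> A \<Longrightarrow> j \<in> A \<Longrightarrow> i < j \<Longrightarrow> rank_in A i < rank_in A j"
  unfolding rank_in_def by (rule psubset_card_mono) auto

lemma rank_in_less_card: "finite A \<Longrightarrow> i \<in> A \<Longrightarrow> rank_in A i < card A"
  unfolding rank_in_def by (rule psubset_card_mono) auto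

lemma inj_on_rank_in: "finite A \<Longrightarrow> inj_on (rank_in A) A"
  by (metis inj_onI linorder_neqE_nat rank_in_less less_irrefl)

lemma rank_in_image: "finite A \<Longrightarrow> rank_in A ` A = {0..<card A}"
proof -
  assume "finite A"
  have "rank_in A ` A \<subseteq> {0..<card A}" using rank_in_less_card[OF \<open>finite A\<close>] by auto
  moreover have "card (rank_in A ` A) = card {0..<card A}"
    using card_image[OF inj_on_rank_in[OF \<open>finite A\<close>]] by simp
  ultimately show ?thesis using card_subset_eq by blast
qed

lemma rank_in_Min: "finite A \<Longrightarrow> A \<noteq> {} \<Longrightarrow> rank_in A (Min A) = 0"
  unfolding rank_in_def by auto

lemma rank_in_Max: "finite A \<Longrightarrow> A \<noteq> {} \<Longrightarrow> rank_in A (Max A) = card A - 1"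
proof -
  assume "finite A" "A \<noteq> {}"
  then have "{j\<in>A. j < Max A} = A - {Max A}"
    using Max_ge[OF \<open>finite A\<close>] by (auto simp: order.order_iff_strict)
  then show ?thesis unfolding rank_in_def using \<open>finite A\<close> \<open>A \<noteq> {}\<close> by simp
qed

lemma nths_nths_rank_in: "finite W \<Longrightarrow> V \<subseteq> W \<Longrightarrow> nths (nths s W) (rank_in W ` V) = nths s V"
proof -
  assume "finite W" "V \<subseteq> W"
  then have "{i \<in> W. \<exists>j \<in> rank_in W ` V. card {i' \<in> W. i' < i} = j} = V"
    using inj_onD[OF inj_on_rank_in] unfolding rank_in_def[symmetric] by blast
  then show ?thesis by (simp add: nths_nths)
qed

definition end_embeddings :: "bool list \<Rightarrow> bool list \<Rightarrow> nat set \<Rightarrow> nat" where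
  "end_embeddings s x W = card {V. V \<subseteq> W \<and> Min W \<in> V \<and> Max W \<in> V \<and> nths s V = x}"

lemma end_embeddings_eq_card_nths:
  assumes W: "W \<subseteq> {0..<length s}" and "W \<noteq> {}"
  shows "card {U. U \<subseteq> {0..<card W} \<and> 0 \<in> U \<and> card W - 1 \<in> U \<and> nths (nths s W) U = x}
       = end_embeddings s x W"
proof -
  have fin: "finite W" using W finite_subset by auto
  let ?L = "{U. U \<subseteq> {0..<card W} \<and> 0 \<in> U \<and> card W - 1 \<in> U \<and> nths (nths s W) U = x}"
  let ?R = "{V. V \<subseteq> W \<and> Min W \<in> V \<and> Max W \<in> V \<and> nths s V = x}"
  note rank_facts = rank_in_image[OF fin] rank_in_Min[OF fin \<open>W \<noteq> {}\<close>] rank_in_Max[OF fin \<open>W \<noteq> {}\<close>]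
  have inj: "inj_on (image (rank_in W)) ?R"
    by (rule inj_on_subset[OF inj_on_image_Pow[OF inj_on_rank_in[OF fin]]]) auto
  have "image (rank_in W) ` ?R = ?L"
  proof (rule set_eqI, rule iffI)
    fix U assume "U \<in> image (rank_in W) ` ?R"
    then obtain V where V: "V \<in> ?R" and U: "U = rank_in W ` V" by blast
    have "rank_in W (Max W) \<in> U" "rank_in W (Min W) \<in> U" using V U by auto
    then show "U \<in> ?L" using V U rank_facts nths_nths_rank_in[OF fin, of V s] by auto
  next
    fix U assume U: "U \<in> ?L"
    define V where "V = {i\<in>W. rank_in W i \<in> U}"
    have "rank_in W ` V = U" using U rank_facts unfolding V_def by auto
    moreover have "{i \<in> W. \<exists>j \<in> U. card {i' \<in> W. i' < i} = j} = V"
      unfolding V_def rank_in_def by auto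
    then have "V \<in> ?R" using U rank_facts fin \<open>W \<noteq> {}\<close> unfolding V_def by (auto simp: nths_nths)
    ultimately show "U \<in> image (rank_in W) ` ?R" by blast
  qed
  then show ?thesis unfolding end_embeddings_def using card_image[OF inj] by simp
qed

lemma hd_strip_last: "length y \<ge> 2 \<Longrightarrow> y = hd y # strip y @ [last y]"
  unfolding strip_def by (cases y) (auto simp: append_butlast_last_id)

lemma nths_Cons_snoc_frame:
  assumes "T \<subseteq> {0..<length xs}"
  shows "nths (a # xs @ [b]) (insert 0 (insert (Suc (length xs)) (Suc ` T))) = a # nths xs T @ [b]"
proof -
  let ?U = "insert 0 (insert (Suc (length xs)) (Suc ` T))"
  have "nths (a # xs @ [b]) ?U = a # nths xs {j. Suc j \<in> ?U} @ [b]"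
    by (simp add: nths_Cons nths_append)
  also have "nths xs {j. Suc j \<in> ?U} = nths xs T"
    using assms by (intro nths_cong) auto
  finally show ?thesis .
qed

lemma binom'_eq_card_end_embeddings:
  assumes y: "length y \<ge> 2" and x: "length x \<ge> 2" and "hd y = hd x" and "last y = last x"
  shows "binom' y x = card {U. U \<subseteq> {0..<length y} \<and> 0 \<in> U \<and> length y - 1 \<in> U \<and> nths y U = x}"
proof -
  define mid where "mid = strip y"
  have y_eq: "y = hd y # mid @ [last y]" unfolding mid_def by (rule hd_strip_last[OF y])
  have length_y: "length y = Suc (Suc (length mid))" by (subst y_eq) simp
  define frame where "frame T = insert 0 (insert (Suc (length mid)) (Suc ` T))" for T
  let ?L = "{T. T \<subseteq> {0..<length mid} \<and> card T = length (strip x) \<and> nths mid T = strip x}"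
  let ?R = "{U. U \<subseteq> {0..<length y} \<and> 0 \<in> U \<and> length y - 1 \<in> U \<and> nths y U = x}"
  have nths_frame: "nths y (frame T) = x \<longleftrightarrow> nths mid T = strip x" if "T \<subseteq> {0..<length mid}" for T
  proof -
    obtain c xm d where "x = c # xm @ [d]" using hd_strip_last[OF x] by blast
    moreover have "nths y (frame T) = hd x # nths mid T @ [last x]"
      using assms nths_Cons_snoc_frame[OF that] unfolding frame_def by (subst y_eq) simp
    ultimately show ?thesis by (simp add: strip_def)
  qed
  have frame_inverse: "T = {j. j < length mid \<and> Suc j \<in> frame T}" if "T \<subseteq> {0..<length mid}" for T
    using that unfolding frame_def by auto
  have inj: "inj_on frame ?L"
  proof (rule inj_onI)
    fix A B assume "A \<in> ?L" "B \<in> ?L" "frame A = frame B"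
    then show "A = B" using frame_inverse[of A] frame_inverse[of B] by simp
  qed
  have "frame ` ?L = ?R"
  proof (rule set_eqI, rule iffI)
    fix U assume "U \<in> frame ` ?L"
    then show "U \<in> ?R" using nths_frame length_y unfolding frame_def by auto
  next
    fix U assume U: "U \<in> ?R"
    define T where "T = {j. j < length mid \<and> Suc j \<in> U}"
    have T: "T \<subseteq> {0..<length mid}" unfolding T_def by auto
    have "frame T = U"
    proof (rule set_eqI)
      fix u show "u \<in> frame T \<longleftrightarrow> u \<in> U"
      proof (cases u)
        case (Suc j)
        have "Suc j \<in> U \<Longrightarrow> j \<le> length mid" using U length_y by auto
        then show ?thesis using U length_y Suc unfolding frame_def T_def by auto
      qed (use U in \<open>auto simp: frame_def\<close>)
    qed
    then have "nths mid T = strip x" using nths_frame[OF T] U by simp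
    moreover have "card T = length (strip x)" using length_nths_subset[OF T] calculation by simp
    ultimately show "U \<in> frame ` ?L" using T \<open>frame T = U\<close> by blast
  qed
  then show ?thesis unfolding binom'_def binom_seq_def mid_def[symmetric]
    using card_image[OF inj] by simp
qed

lemma binom'_nths_eq_end_embeddings:
  assumes W: "W \<subseteq> {0..<length s}" and "card W \<ge> 2" and "length x \<ge> 2"
    and "hd (nths s W) = hd x" and "last (nths s W) = last x"
  shows "binom' (nths s W) x = end_embeddings s x W"
proof -
  have "W \<noteq> {}" using assms(2) by auto
  then show ?thesis
    using assms binom'_eq_card_end_embeddings[of "nths s W" x] end_embeddings_eq_card_nths[OF W]
    by (simp add: length_nths_subset[OF W])
qed

lemma nths_in_Yset:
  assumes W: "W \<subseteq> {0..<length s}" and "W \<noteq> {}" and "end_embeddings s x W \<noteq> 0"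
  shows "nths s W \<in> Yset (card W) x"
proof -
  have fin: "finite W" using W finite_subset by auto
  obtain V where V: "V \<subseteq> W" "Min W \<in> V" "Max W \<in> V" "nths s V = x"
    using assms(3) unfolding end_embeddings_def by (metis (mono_tags, lifting) card.empty empty_Collect_eq)
  define y where "y = nths s W"
  define U where "U = rank_in W ` V"
  have length_y: "length y = card W" using length_nths_subset[OF W] y_def by simp
  have x_eq: "nths y U = x" unfolding y_def U_def nths_nths_rank_in[OF fin V(1)] by (rule V(4))
  have "0 \<in> U" "length y - 1 \<in> U"
    unfolding U_def using V rank_in_Min[OF fin] rank_in_Max[OF fin] length_y \<open>W \<noteq> {}\<close> by force+
  have "y \<noteq> []" using length_y \<open>W \<noteq> {}\<close> fin by auto
  obtain a t where "y = a # t" using \<open>y \<noteq> []\<close> by (cases y) auto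
  then have "x = a # nths t {j. Suc j \<in> U}" using x_eq \<open>0 \<in> U\<close> by (simp add: nths_Cons)
  then have "hd x = hd y" using \<open>y = a # t\<close> by simp
  obtain t' b where "y = t' @ [b]" using \<open>y \<noteq> []\<close> by (metis rev_exhaust)
  then have "x = nths t' U @ [b]" using x_eq \<open>length y - 1 \<in> U\<close> by (simp add: nths_append)
  then have "last x = last y" using \<open>y = t' @ [b]\<close> by simp
  have "subseq x y" using x_eq subseq_conv_nths by metis
  then show ?thesis unfolding Yset_def
    using length_y y_def \<open>hd x = hd y\<close> \<open>last x = last y\<close> by simp
qed

lemma end_embeddings_card_eq:
  assumes W: "W \<subseteq> {0..<length s}" and "card W = length x" and "length x \<ge> 2"
  shows "end_embeddings s x W = (if nths s W = x then 1 else 0)"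
proof -
  have fin: "finite W" using W finite_subset by auto
  have "W \<noteq> {}" using assms by auto
  have "{V. V \<subseteq> W \<and> Min W \<in> V \<and> Max W \<in> V \<and> nths s V = x} = (if nths s W = x then {W} else {})"
  proof (rule set_eqI, rule iffI)
    fix V assume "V \<in> {V. V \<subseteq> W \<and> Min W \<in> V \<and> Max W \<in> V \<and> nths s V = x}"
    then have "V \<subseteq> W" "nths s V = x" by auto
    then have "card V = card W" using length_nths_subset[of V s] W assms(2) by auto
    then have "V = W" using card_subset_eq[OF fin \<open>V \<subseteq> W\<close>] by simp
    then show "V \<in> (if nths s W = x then {W} else {})" using \<open>nths s V = x\<close> by simp
  next
    fix V assume "V \<in> (if nths s W = x then {W} else {})"
    then have "V = W" "nths s W = x" by (auto split: if_splits)
    then show "V \<in> {V. V \<subseteq> W \<and> Min W \<in> V \<and> Max W \<in> V \<and> nths s V = x}"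
      using Min_in[OF fin \<open>W \<noteq> {}\<close>] Max_in[OF fin \<open>W \<noteq> {}\<close>] by simp
  qed
  then show ?thesis unfolding end_embeddings_def by simp
qed

lemma end_embeddings_card_less:
  assumes W: "W \<subseteq> {0..<length s}" and "card W < length x"
  shows "end_embeddings s x W = 0"
proof -
  have "nths s V \<noteq> x" if "V \<subseteq> W" for V
  proof -
    have "length (nths s V) = card V" using that W by (intro length_nths_subset) auto
    also have "card V \<le> card W" using that W by (meson card_mono finite_atLeastLessThan finite_subset)
    finally show ?thesis using assms(2) by auto
  qed
  then have no_embedding: "{V. V \<subseteq> W \<and> Min W \<in> V \<and> Max W \<in> V \<and> nths s V = x} = {}" by blast
  show ?thesis unfolding end_embeddings_def no_embedding by simp
qed

section \<open>Inclusion--exclusion over windows\<close>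

lemma sum_supersets_alternating:
  assumes "finite I" "V \<subseteq> I"
  shows "(\<Sum>W | W \<subseteq> I \<and> V \<subseteq> W. (-1::real) ^ card W) = (if V = I then (-1) ^ card I else 0)"
proof (cases "V = I")
  case True
  then have "{W. W \<subseteq> I \<and> V \<subseteq> W} = {I}" by auto
  then show ?thesis using True by simp
next
  case False
  then have "V \<subset> I" using assms by auto
  have fin: "finite {W. W \<subseteq> I \<and> V \<subseteq> W}"
    by (rule finite_subset[of _ "Pow I"]) (use assms(1) in auto)
  have "card {W \<in> {W. W \<subseteq> I \<and> V \<subseteq> W}. even (card W)} =
      card {W \<in> {W. W \<subseteq> I \<and> V \<subseteq> W}. odd (card W)}"
    using card_subsupersets_even_odd[OF assms(1) \<open>V \<subset> I\<close>] by (simp add: conj_assoc)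
  then show ?thesis using sum_alternating_cancels[OF fin, of card] False by simp
qed

lemma Min_Max_eq_if_between:
  fixes V W :: "nat set"
  assumes "finite V" "V \<noteq> {}" "V \<subseteq> W" "W \<subseteq> {Min V..Max V}"
  shows "Min W = Min V" "Max W = Max V"
proof -
  have "finite W" using assms(4) by (meson finite_atLeastAtMost finite_subset)
  have "W \<noteq> {}" using assms(2,3) by blast
  have "Min W \<in> {Min V..Max V}" "Max W \<in> {Min V..Max V}"
    using assms(4) Min_in[OF \<open>finite W\<close> \<open>W \<noteq> {}\<close>] Max_in[OF \<open>finite W\<close> \<open>W \<noteq> {}\<close>] by blast+
  moreover have "Min V \<in> W" "Max V \<in> W"
    using assms(3) Min_in[OF assms(1,2)] Max_in[OF assms(1,2)] by blast+
  then have "Min W \<le> Min V" "Max V \<le> Max W"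
    using Min_le[OF \<open>finite W\<close>] Max_ge[OF \<open>finite W\<close>] by blast+
  ultimately show "Min W = Min V" "Max W = Max V" by (meson atLeastAtMost_iff antisym)+
qed

lemma end_supersets_iff:
  fixes V W :: "nat set"
  assumes "finite V" "V \<noteq> {}" "finite W"
  shows "V \<subseteq> W \<and> Min W \<in> V \<and> Max W \<in> V \<longleftrightarrow> V \<subseteq> W \<and> W \<subseteq> {Min V..Max V}"
proof
  assume *: "V \<subseteq> W \<and> Min W \<in> V \<and> Max W \<in> V"
  then have "Min V \<le> Min W" "Max W \<le> Max V" using Min_le[OF assms(1)] Max_ge[OF assms(1)] by blast+
  have "W \<subseteq> {Min V..Max V}"
  proof
    fix w assume "w \<in> W"
    then have "Min W \<le> w" "w \<le> Max W" using Min_le[OF assms(3)] Max_ge[OF assms(3)] by blast+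
    then show "w \<in> {Min V..Max V}"
      using \<open>Min V \<le> Min W\<close> \<open>Max W \<le> Max V\<close> by (meson atLeastAtMost_iff order_trans)
  qed
  then show "V \<subseteq> W \<and> W \<subseteq> {Min V..Max V}" using * by blast
next
  assume between: "V \<subseteq> W \<and> W \<subseteq> {Min V..Max V}"
  then have "Min W = Min V" "Max W = Max V" using Min_Max_eq_if_between[OF assms(1,2)] by blast+
  then show "V \<subseteq> W \<and> Min W \<in> V \<and> Max W \<in> V"
    using between Min_in[OF assms(1,2)] Max_in[OF assms(1,2)] by simp
qed

lemma alternating_end_superset_term:
  fixes p :: real and V W :: "nat set"
  assumes "finite V" "V \<noteq> {}" "finite W"
  shows "(if V \<subseteq> W \<and> Min W \<in> V \<and> Max W \<in> V
          then (-1) ^ (card W - card V) * p ^ (window_length W - card V) else 0)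
      = (if W \<subseteq> {Min V..Max V} \<and> V \<subseteq> W
          then (-1) ^ card V * p ^ (window_length V - card V) * (-1) ^ card W else 0)"
proof (cases "V \<subseteq> W \<and> W \<subseteq> {Min V..Max V}")
  case between: True
  then have "V \<subseteq> W" "W \<subseteq> {Min V..Max V}" by blast+
  then have "Min W = Min V" "Max W = Max V"
    by (rule Min_Max_eq_if_between[OF assms(1,2)])+
  have "card V \<le> card W" using card_mono[OF assms(3) \<open>V \<subseteq> W\<close>] .
  then have "(-1::real) ^ (card W - card V) = (-1) ^ card V * (-1) ^ card W"
    by (simp add: minus_one_power_iff)
  moreover have "V \<subseteq> W \<and> Min W \<in> V \<and> Max W \<in> V"
    using between end_supersets_iff[OF assms] by blast
  ultimately show ?thesis
    using between \<open>Min W = Min V\<close> \<open>Max W = Max V\<close> by (simp add: mult_ac)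
next
  case False
  then have "\<not> (V \<subseteq> W \<and> Min W \<in> V \<and> Max W \<in> V)"
    using end_supersets_iff[OF assms] by blast
  then show ?thesis using False by auto
qed

lemma sum_end_supersets:
  fixes p :: real
  assumes V: "V \<subseteq> {0..<length s}" and "length x \<ge> 1"
  shows "(\<Sum>W\<in>Pow {0..<length s}. (if V \<subseteq> W \<and> Min W \<in> V \<and> Max W \<in> V \<and> nths s V = x
          then (-1) ^ (card W - length x) * p ^ (window_length W - length x) else 0))
       = (if nths s V = x \<and> V = {Min V..Max V} then 1 else 0)"
proof (cases "nths s V = x")
  case True
  let ?k = "length x" and ?I = "{Min V..Max V}"
  let ?c = "(-1) ^ ?k * p ^ (window_length V - ?k)"
  have "finite V" using V finite_subset by auto
  have "card V = ?k" using True length_nths_subset[OF V] by simp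
  then have "V \<noteq> {}" using assms by auto
  have "V \<subseteq> ?I" using Min_le[OF \<open>finite V\<close>] Max_ge[OF \<open>finite V\<close>] by auto
  have "Max V < length s" using V Max_in[OF \<open>finite V\<close> \<open>V \<noteq> {}\<close>] by auto
  then have "?I \<subseteq> {0..<length s}" by auto
  have "(\<Sum>W\<in>Pow {0..<length s}. (if V \<subseteq> W \<and> Min W \<in> V \<and> Max W \<in> V \<and> nths s V = x
          then (-1) ^ (card W - ?k) * p ^ (window_length W - ?k) else 0))
      = (\<Sum>W\<in>Pow {0..<length s}. (if W \<subseteq> ?I \<and> V \<subseteq> W then ?c * (-1) ^ card W else 0))"
  proof (rule sum.cong[OF refl])
    fix W assume "W \<in> Pow {0..<length s}"
    then have "finite W" by (metis PowD finite_atLeastLessThan finite_subset)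
    show "(if V \<subseteq> W \<and> Min W \<in> V \<and> Max W \<in> V \<and> nths s V = x
          then (-1) ^ (card W - ?k) * p ^ (window_length W - ?k) else 0)
      = (if W \<subseteq> ?I \<and> V \<subseteq> W then ?c * (-1) ^ card W else 0)"
      using alternating_end_superset_term[OF \<open>finite V\<close> \<open>V \<noteq> {}\<close> \<open>finite W\<close>, of p] True
      unfolding \<open>card V = ?k\<close> by simp
  qed
  also have "\<dots> = (\<Sum>W\<in>{W \<in> Pow {0..<length s}. W \<subseteq> ?I \<and> V \<subseteq> W}. ?c * (-1) ^ card W)"
    by (simp only: sum.inter_filter[OF finite_Pow_iff[THEN iffD2, OF finite_atLeastLessThan]])
  also have "{W \<in> Pow {0..<length s}. W \<subseteq> ?I \<and> V \<subseteq> W} = {W. W \<subseteq> ?I \<and> V \<subseteq> W}"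
    using \<open>?I \<subseteq> {0..<length s}\<close> by blast
  also have "(\<Sum>W | W \<subseteq> ?I \<and> V \<subseteq> W. ?c * (-1) ^ card W) =
      ?c * (\<Sum>W | W \<subseteq> ?I \<and> V \<subseteq> W. (-1) ^ card W)"
    by (rule sum_distrib_left[symmetric])
  also have "\<dots> = (if V = ?I then 1 else 0)"
  proof (cases "V = ?I")
    case interval: True
    have "card ?I = ?k" unfolding interval[symmetric] by (rule \<open>card V = ?k\<close>)
    then have "window_length V = ?k" by simp
    then show ?thesis
      unfolding sum_supersets_alternating[OF finite_atLeastAtMost \<open>V \<subseteq> ?I\<close>] if_P[OF interval]
        \<open>card ?I = ?k\<close>
      by (simp add: minus_one_power_iff)
  qed (simp add: sum_supersets_alternating[OF finite_atLeastAtMost \<open>V \<subseteq> ?I\<close>])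
  finally show ?thesis using True by simp
qed simp

lemma nths_atLeastLessThan: "nths xs {i..<i + k} = take k (drop i xs)"
proof -
  have "{i..<i + k} = (+) i ` {..<k}" by (simp add: lessThan_atLeast0 add.commute)
  then show ?thesis by (simp add: nths_drop[symmetric])
qed

lemma occ_eq_card_interval_embeddings:
  assumes k: "length x \<ge> 1"
  shows "occ x s = card {V \<in> Pow {0..<length s}. nths s V = x \<and> V = {Min V..Max V}}"
proof -
  let ?k = "length x"
  let ?A = "{i. i + ?k \<le> length s \<and> take ?k (drop i s) = x}"
  let ?B = "{V \<in> Pow {0..<length s}. nths s V = x \<and> V = {Min V..Max V}}"
  let ?f = "\<lambda>i. {i..<i + ?k}"
  have inj: "inj_on ?f ?A"
  proof (rule inj_onI)
    fix i j assume "?f i = ?f j"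
    moreover have "i \<in> ?f i" "j \<in> ?f j" using k by auto
    ultimately show "i = j" by (metis atLeastLessThan_iff le_antisym)
  qed
  have "?f ` ?A = ?B"
  proof (rule set_eqI, rule iffI)
    fix V assume "V \<in> ?f ` ?A"
    then obtain i where i: "i \<in> ?A" and V: "V = ?f i" by blast
    have "Min V = i" "Max V = i + ?k - 1" using k V by (auto intro!: Min_eqI Max_eqI)
    then show "V \<in> ?B" using i V k nths_atLeastLessThan[of s i ?k] by auto
  next
    fix V assume V: "V \<in> ?B"
    have "finite V" using V finite_subset by auto
    have "card V = ?k" using V length_nths_subset[of V s] by auto
    then have "V \<noteq> {}" using k by auto
    have "Min V \<le> Max V" using \<open>finite V\<close> \<open>V \<noteq> {}\<close> by simp
    moreover have "card {Min V..Max V} = ?k" using V \<open>card V = ?k\<close> by simp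
    ultimately have "Max V + 1 = Min V + ?k" by simp
    then have "V = ?f (Min V)" using V by (auto simp flip: atLeastLessThanSuc_atLeastAtMost)
    moreover have "Max V < length s" using V Max_in[OF \<open>finite V\<close> \<open>V \<noteq> {}\<close>] by auto
    ultimately show "V \<in> ?f ` ?A" using V \<open>Max V + 1 = Min V + ?k\<close> nths_atLeastLessThan[of s "Min V" ?k]
      by (intro image_eqI[of _ _ "Min V"]) auto
  qed
  then show ?thesis unfolding occ_def using card_image[OF inj] by simp
qed

lemma alternating_end_embeddings_sum_eq_occ:
  fixes p :: real
  assumes "length x \<ge> 1"
  shows "(\<Sum>W\<in>Pow {0..<length s}. (-1) ^ (card W - length x) * p ^ (window_length W - length x)
          * real (end_embeddings s x W)) = real (occ x s)"
proof -
  let ?P = "Pow {0..<length s}"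
  let ?E = "\<lambda>V W. V \<subseteq> W \<and> Min W \<in> V \<and> Max W \<in> V \<and> nths s V = x"
  have "finite ?P" by simp
  have "real (end_embeddings s x W) = (\<Sum>V\<in>?P. (if ?E V W then 1 else 0))" if "W \<in> ?P" for W
  proof -
    have "{V. ?E V W} = {V \<in> ?P. ?E V W}" using that by auto
    then show ?thesis unfolding end_embeddings_def
      by (simp only: real_of_card sum.inter_filter[OF \<open>finite ?P\<close>])
  qed
  then have "(\<Sum>W\<in>?P. (-1) ^ (card W - length x) * p ^ (window_length W - length x)
          * real (end_embeddings s x W))
     = (\<Sum>W\<in>?P. \<Sum>V\<in>?P. (if ?E V W
          then (-1) ^ (card W - length x) * p ^ (window_length W - length x) else 0))"
    by (auto simp: sum_distrib_left intro!: sum.cong)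
  also have "\<dots> = (\<Sum>V\<in>?P. \<Sum>W\<in>?P. (if ?E V W
          then (-1) ^ (card W - length x) * p ^ (window_length W - length x) else 0))"
    by (rule sum.swap)
  also have "\<dots> = (\<Sum>V\<in>?P. (if nths s V = x \<and> V = {Min V..Max V} then 1 else 0))"
    using sum_end_supersets[OF _ assms] by (intro sum.cong) auto
  also have "\<dots> = real (occ x s)"
    unfolding occ_eq_card_interval_embeddings[OF assms]
    by (simp only: real_of_card sum.inter_filter[OF \<open>finite ?P\<close>])
  finally show ?thesis .
qed

section \<open>Regrouping the correction terms\<close>

lemma finite_Yset: "finite (Yset i x)"
proof -
  have "Yset i x \<subseteq> {xs. set xs \<subseteq> UNIV \<and> length xs = i}" unfolding Yset_def by auto
  then show ?thesis using finite_lists_length_eq[of "UNIV :: bool set" i] finite_subset by auto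
qed

lemma power_mult_ratio_power:
  fixes q p :: real
  assumes "q \<noteq> 0" "k \<le> i" "i \<le> L"
  shows "q ^ i * p ^ (L - i) * (p / q) ^ (i - k) = q ^ k * p ^ (L - k)"
proof -
  obtain a b where "i = k + a" "L = i + b" using assms(2,3) le_Suc_ex by metis
  then show ?thesis using assms(1) by (simp add: power_add power_divide field_simps)
qed

lemma Yset_window_term:
  fixes p :: real
  assumes "p \<noteq> 1" and k: "length x \<ge> 2" and i: "length x < i" and W: "W \<subseteq> {0..<length s}"
  shows "(if nths s W \<in> Yset i x then (1 - p) ^ i * p ^ (window_length W - i)
            * (p / (1 - p)) ^ (i - length x) * real (binom' (nths s W) x) else 0)
       = (if card W = i then (1 - p) ^ length x * p ^ (window_length W - length x)
            * real (end_embeddings s x W) else 0)"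
proof (cases "nths s W \<in> Yset i x")
  case True
  have "finite W" using W finite_subset by auto
  have "card W = i" using True length_nths_subset[OF W] unfolding Yset_def by simp
  then have "W \<noteq> {}" using i by auto
  have "hd (nths s W) = hd x" "last (nths s W) = last x" using True unfolding Yset_def by auto
  then have "binom' (nths s W) x = end_embeddings s x W"
    using binom'_nths_eq_end_embeddings[OF W] \<open>card W = i\<close> i k by simp
  moreover have "i \<le> window_length W"
    using card_le_window_length[OF \<open>finite W\<close> \<open>W \<noteq> {}\<close>] \<open>card W = i\<close> by simp
  then have "(1 - p) ^ i * p ^ (window_length W - i) * (p / (1 - p)) ^ (i - length x)
      = (1 - p) ^ length x * p ^ (window_length W - length x)"
    using power_mult_ratio_power[of "1 - p" "length x" i "window_length W" p] assms by simp
  ultimately show ?thesis using True \<open>card W = i\<close> by simp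
next
  case False
  then have "card W = i \<Longrightarrow> end_embeddings s x W = 0"
    using nths_in_Yset[OF W] i k by fastforce
  then show ?thesis using False by simp
qed

lemma sum_Yset_eq_sum_windows:
  fixes p :: real
  assumes "p \<noteq> 1" and k: "length x \<ge> 2" and i: "length x < i"
  shows "(\<Sum>y\<in>Yset i x. (-1) ^ (length y - length x + 1) * exp_occ p s y * real (binom' y x)
             * (p / (1 - p)) ^ (i - length x))
    = (\<Sum>W\<in>Pow {0..<length s}. (if card W = i then (-1) ^ (i - length x + 1) * (1 - p) ^ length x
             * p ^ (window_length W - length x) * real (end_embeddings s x W) else 0))"
proof -
  let ?k = "length x" and ?P = "Pow {0..<length s}" and ?Y = "Yset i x"
  define G where "G W = (-1) ^ (i - ?k + 1) * ((1 - p) ^ i * p ^ (window_length W - i)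
      * (p / (1 - p)) ^ (i - ?k) * real (binom' (nths s W) x))" for W
  have "(\<Sum>y\<in>?Y. (-1) ^ (length y - ?k + 1) * exp_occ p s y * real (binom' y x) * (p / (1 - p)) ^ (i - ?k))
      = (\<Sum>y\<in>?Y. \<Sum>W\<in>?P. (if nths s W = y then G W else 0))"
  proof (rule sum.cong[OF refl])
    fix y assume "y \<in> ?Y"
    then have "length y = i" unfolding Yset_def by simp
    then have "y \<noteq> []" using i by auto
    show "(-1) ^ (length y - ?k + 1) * exp_occ p s y * real (binom' y x) * (p / (1 - p)) ^ (i - ?k)
       = (\<Sum>W\<in>?P. (if nths s W = y then G W else 0))"
      unfolding exp_occ_eq_embedding_sum[OF \<open>y \<noteq> []\<close>] embedding_sum_def sum_distrib_left
        sum_distrib_right \<open>length y = i\<close>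
      by (rule sum.cong[OF refl]) (auto simp: G_def \<open>length y = i\<close> mult_ac)
  qed
  also have "\<dots> = (\<Sum>W\<in>?P. \<Sum>y\<in>?Y. (if nths s W = y then G W else 0))" by (rule sum.swap)
  also have "\<dots> = (\<Sum>W\<in>?P. (if nths s W \<in> ?Y then G W else 0))"
    by (rule sum.cong[OF refl]) (simp add: sum.delta finite_Yset)
  also have "\<dots> = (\<Sum>W\<in>?P. (if card W = i then (-1) ^ (i - ?k + 1) * (1 - p) ^ ?k
             * p ^ (window_length W - ?k) * real (end_embeddings s x W) else 0))"
  proof (rule sum.cong[OF refl])
    fix W assume "W \<in> ?P"
    then show "(if nths s W \<in> ?Y then G W else 0) = (if card W = i then (-1) ^ (i - ?k + 1) * (1 - p) ^ ?k
             * p ^ (window_length W - ?k) * real (end_embeddings s x W) else 0)"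
      using Yset_window_term[OF assms, of W s] unfolding G_def
      by (simp add: mult.assoc split: if_splits)
  qed
  finally show ?thesis .
qed

lemma exp_occ_eq_sum_end_embeddings:
  fixes p :: real
  assumes k: "length x \<ge> 2"
  shows "exp_occ p s x = (\<Sum>W\<in>Pow {0..<length s}. (if card W = length x
      then (1 - p) ^ length x * p ^ (window_length W - length x) * real (end_embeddings s x W) else 0))"
proof -
  have "x \<noteq> []" using k by auto
  show ?thesis unfolding exp_occ_eq_embedding_sum[OF \<open>x \<noteq> []\<close>] embedding_sum_def
  proof (rule sum.cong[OF refl])
    fix W assume "W \<in> Pow {0..<length s}"
    then have W: "W \<subseteq> {0..<length s}" by simp
    show "(if nths s W = x then (1 - p) ^ length x * p ^ (window_length W - length x) else 0) =
      (if card W = length x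
       then (1 - p) ^ length x * p ^ (window_length W - length x) * real (end_embeddings s x W) else 0)"
      using end_embeddings_card_eq[OF W _ k] length_nths_subset[OF W] by auto
  qed
qed

lemma correction_sum_eq_sum_end_embeddings:
  fixes p :: real
  assumes "p \<noteq> 1" and k: "length x \<ge> 2"
  shows "(\<Sum>i = length x + 1..length s. \<Sum>y\<in>Yset i x.
           (-1) ^ (length y - length x + 1) * exp_occ p s y * real (binom' y x)
             * (p / (1 - p)) ^ (i - length x))
     = (\<Sum>W\<in>Pow {0..<length s}. (if length x < card W then (-1) ^ (card W - length x + 1)
          * (1 - p) ^ length x * p ^ (window_length W - length x) * real (end_embeddings s x W) else 0))"
proof -
  let ?k = "length x" and ?P = "Pow {0..<length s}"
  define g where "g i W = (-1) ^ (i - ?k + 1) * (1 - p) ^ ?k * p ^ (window_length W - ?k)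
      * real (end_embeddings s x W)" for i W
  have "(\<Sum>i = ?k + 1..length s. \<Sum>y\<in>Yset i x.
           (-1) ^ (length y - ?k + 1) * exp_occ p s y * real (binom' y x) * (p / (1 - p)) ^ (i - ?k))
       = (\<Sum>i = ?k + 1..length s. \<Sum>W\<in>?P. (if card W = i then g i W else 0))"
    using sum_Yset_eq_sum_windows[OF assms] unfolding g_def by (intro sum.cong refl) simp
  also have "\<dots> = (\<Sum>W\<in>?P. \<Sum>i = ?k + 1..length s. (if card W = i then g i W else 0))"
    by (rule sum.swap)
  also have "\<dots> = (\<Sum>W\<in>?P. (if ?k < card W then g (card W) W else 0))"
  proof (rule sum.cong[OF refl])
    fix W assume "W \<in> ?P"
    then have "card W \<le> length s" using card_mono[of "{0..<length s}" W] by simp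
    then show "(\<Sum>i = ?k + 1..length s. (if card W = i then g i W else 0)) =
        (if ?k < card W then g (card W) W else 0)"
      by (simp add: sum.delta')
  qed
  finally show ?thesis unfolding g_def .
qed

lemma exp_occ_minus_correction_sum:
  fixes p :: real
  assumes "p \<noteq> 1" and k: "length x \<ge> 2"
  shows "exp_occ p s x - (\<Sum>i = length x + 1..length s. \<Sum>y\<in>Yset i x.
           (-1) ^ (length y - length x + 1) * exp_occ p s y * real (binom' y x)
             * (p / (1 - p)) ^ (i - length x))
     = (1 - p) ^ length x * (\<Sum>W\<in>Pow {0..<length s}. (-1) ^ (card W - length x)
          * p ^ (window_length W - length x) * real (end_embeddings s x W))"
  unfolding exp_occ_eq_sum_end_embeddings[OF k] correction_sum_eq_sum_end_embeddings[OF assms]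
    sum_subtractf[symmetric] sum_distrib_left
proof (rule sum.cong[OF refl])
  let ?k = "length x"
  fix W assume "W \<in> Pow {0..<length s}"
  then have "card W < ?k \<Longrightarrow> end_embeddings s x W = 0" using end_embeddings_card_less by simp
  moreover have "?k < card W \<Longrightarrow> card W - ?k + 1 = Suc (card W - ?k)" by simp
  ultimately show "(if card W = ?k then (1 - p) ^ ?k * p ^ (window_length W - ?k)
        * real (end_embeddings s x W) else 0)
      - (if ?k < card W then (-1) ^ (card W - ?k + 1) * (1 - p) ^ ?k * p ^ (window_length W - ?k)
        * real (end_embeddings s x W) else 0)
    = (1 - p) ^ ?k * ((-1) ^ (card W - ?k) * p ^ (window_length W - ?k) * real (end_embeddings s x W))"
    by (cases "card W" ?k rule: linorder_cases) (simp_all add: mult_ac)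
qed

theorem lemma4:
  fixes s x :: "bool list" and p :: real
  assumes "0 \<le> p" and "p < 1" and "length x \<ge> 2"
  shows "real (occ x s) =
    1 / (1 - p) ^ length x *
      (exp_occ p s x -
        (\<Sum>i = length x + 1..length s. \<Sum>y\<in>Yset i x.
           (-1) ^ (length y - length x + 1) * exp_occ p s y * real (binom' y x)
             * (p / (1 - p)) ^ (i - length x)))"
proof -
  have "p \<noteq> 1" using assms(2) by simp
  then show ?thesis
    using exp_occ_minus_correction_sum[OF _ assms(3), of p s]
      alternating_end_embeddings_sum_eq_occ[where p=p and s=s] assms(3)
    by simp
qed

end
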